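(* Let $n$, $k$, $t$, $\ell$, $i$, $j$ be positive integers with $i\leq\min\{t,j\}$, $2t-i\leq k$, $t+j-i\leq\ell$ and $n\geq 2k$, and let $V$ be an $n$-dimensional vector space over $\mathbb{F}_q$. Suppose $\mathcal{F}\subseteq{V\brack k}$ is an almost $t$-intersecting family with $2t-i\leq\tau_t(\mathcal{F})\leq k$. If $X_1,X_2\in{V\brack \ell}$ with $\dim(X_1\cap X_2)=j$, then $$\frac{|\mathcal{F}(X_1,X_2;t,i)|}{q^{2(j-i)(t-i)}{j\brack i}{\ell-j\brack t-i}^{2}}\leq{k-t+1\brack 1}^{\tau_t(\mathcal{F})+i-2t}{n-\tau_t(\mathcal{F})\brack k-\tau_t(\mathcal{F})}+\sum_{m=0}^{\tau_t(\mathcal{F})+i-2t-1}{k-t+1\brack 1}^{m}.$$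
   Context: $q$ is a prime power; ${W\brack k}$ is the set of $k$-dimensional subspaces of $W$ and ${m\brack r}$ the Gaussian binomial coefficient $\prod_{s=0}^{r-1}\frac{q^{m-s}-1}{q^{r-s}-1}$ (equal to $1$ for $r=0$). A family $\mathcal{F}\subseteq{V\brack k}$ is almost $t$-intersecting if for each $F\in\mathcal{F}$ there is at most one $F'\in\mathcal{F}$ with $\dim(F\cap F')<t$. A subspace $W$ is a $t$-cover of $\mathcal{F}$ if $\dim(W\cap F)\geq t$ for all $F\in\mathcal{F}$; $\tau_t(\mathcal{F})$ is the minimum dimension of a $t$-cover. For subspaces $A,B$ of $V$, $\mathcal{F}(A,B;t,i)=\{F\in\mathcal{F}: \dim(F\cap A)\geq t,\ \dim(F\cap B)\geq t,\ \dim(F\cap A\cap B)=i\}$. *)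

theory Defs
  imports "HOL-Analysis.Analysis"
begin

text \<open>Ambient space: V = 'a^'n over a finite field 'a (so q = CARD('a)), dim V = CARD('n).\<close>

definition gauss_binom :: "nat \<Rightarrow> nat \<Rightarrow> nat \<Rightarrow> real" where
  "gauss_binom q m r = (\<Prod>s<r. (real q ^ (m - s) - 1) / (real q ^ (r - s) - 1))"

definition subspaces_dim :: "nat \<Rightarrow> ('a::field ^ 'n) set set" where
  "subspaces_dim k = {W. vec.subspace W \<and> vec.dim W = k}"

definition almost_t_intersecting :: "nat \<Rightarrow> ('a::field ^ 'n) set set \<Rightarrow> bool" where
  "almost_t_intersecting t \<F> \<longleftrightarrow>
     (\<forall>F\<in>\<F>. card {F'\<in>\<F>. vec.dim (F \<inter> F') < t} \<le> 1)"

definition is_t_cover :: "nat \<Rightarrow> ('a::field ^ 'n) set set \<Rightarrow> ('a ^ 'n) set \<Rightarrow> bool" where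
  "is_t_cover t \<F> W \<longleftrightarrow> vec.subspace W \<and> (\<forall>F\<in>\<F>. vec.dim (W \<inter> F) \<ge> t)"

definition tau :: "nat \<Rightarrow> ('a::field ^ 'n) set set \<Rightarrow> nat" where
  "tau t \<F> = (LEAST d. \<exists>W. is_t_cover t \<F> W \<and> vec.dim W = d)"

definition restr_family ::
  "('a::field ^ 'n) set set \<Rightarrow> ('a ^ 'n) set \<Rightarrow> ('a ^ 'n) set \<Rightarrow> nat \<Rightarrow> nat \<Rightarrow> ('a ^ 'n) set set" where
  "restr_family \<F> A B t i = {F\<in>\<F>. vec.dim (F \<inter> A) \<ge> t \<and> vec.dim (F \<inter> B) \<ge> t
                                   \<and> vec.dim (F \<inter> A \<inter> B) = i}"

end

theory Submission
  imports Defs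
begin

text \<open>Let \<open>I = F \<inter> X\<^sub>1 \<inter> X\<^sub>2\<close> for a member \<open>F\<close> of \<open>\<F>(X\<^sub>1,X\<^sub>2;t,i)\<close>, and choose
  \<open>t\<close>-dimensional subspaces \<open>A \<subseteq> F \<inter> X\<^sub>1\<close> and \<open>B \<subseteq> F \<inter> X\<^sub>2\<close> through \<open>I\<close>. Then \<open>A \<inter> B = I\<close>,
  so \<open>F\<close> contains the \<open>(2t - i)\<close>-dimensional space \<open>A + B\<close>, and there are at most
  \<open>q\<^bsup>2(j-i)(t-i)\<^esup>[j,i][l-j,t-i]\<^sup>2\<close> such spaces. It remains to bound the number of members
  containing a fixed subspace \<open>S\<close> with \<open>dim S + d = \<tau>\<^sub>t(\<F>)\<close> by
  \<open>c\<^sup>d[n-\<tau>,k-\<tau>] + \<Sum>\<^bsub>m<d\<^esub> c\<^sup>m\<close>, \<open>c = [k-t+1,1]\<close>, by induction on \<open>d\<close>: as \<open>S\<close> is no \<open>t\<close>-cover,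
  some member \<open>F'\<close> meets \<open>S\<close> in dimension \<open>< t\<close>, and a \<open>(k-t+1)\<close>-dimensional \<open>D \<subseteq> F'\<close> with
  \<open>D \<inter> S = 0\<close> meets every member \<open>F\<close> with \<open>dim (F \<inter> F') \<ge> t\<close>. So, except for the at most
  one member far from \<open>F'\<close>, every member containing \<open>S\<close> contains \<open>S + L\<close> for one of the at
  most \<open>c\<close> lines \<open>L \<subseteq> D\<close>, and \<open>dim (S + L) = dim S + 1\<close>.\<close>

lemma card_field_ge_2: "2 \<le> CARD('a::{field,finite})"
proof -
  have "card {0::'a, 1} \<le> CARD('a)" by (rule card_mono) auto
  then show ?thesis by simp
qed

lemma card_span_insert:
  fixes S :: "('a::{field,finite}^'n) set"
  assumes "v \<notin> vec.span S"
  shows "card (vec.span (insert v S)) = CARD('a) * card (vec.span S)"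
proof -
  have eq: "vec.span (insert v S) = (\<lambda>(c, y). c *s v + y) ` (UNIV \<times> vec.span S)"
    unfolding vec.span_insert
  proof (safe, goal_cases)
    case (1 x k) then show ?case by (intro image_eqI[of _ _ "(k, x - k *s v)"]) auto
  next
    case (2 x c y) then show ?case by (intro exI[of _ c]) auto
  qed
  have "inj_on (\<lambda>(c, y). c *s v + y) (UNIV \<times> vec.span S)"
  proof (rule inj_onI, clarify)
    fix c y c' y'
    assume y: "y \<in> vec.span S" "y' \<in> vec.span S" and e: "c *s v + y = c' *s v + y'"
    show "c = c' \<and> y = y'"
    proof (cases "c = c'")
      case True then show ?thesis using e by simp
    next
      case False
      have "(c - c') *s v = y' - y" using e by (simp add: algebra_simps)
      then have "inverse (c - c') *s ((c - c') *s v) = inverse (c - c') *s (y' - y)" by simp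
      then have "v = inverse (c - c') *s (y' - y)"
        using False by (simp only: vector_smult_assoc) simp
      then have "v \<in> vec.span S" using y by (simp add: vec.span_scale vec.span_diff)
      then show ?thesis using assms by blast
    qed
  qed
  then show ?thesis unfolding eq by (simp add: card_image card_cartesian_product)
qed

lemma card_span_independent:
  fixes B :: "('a::{field,finite}^'n) set"
  assumes "vec.independent B"
  shows "card (vec.span B) = CARD('a) ^ card B"
proof -
  have "finite B" using assms vec.finiteI_independent by blast
  then show ?thesis using assms
  proof (induction B rule: finite_induct)
    case empty then show ?case by simp
  next
    case (insert v B)
    then have "vec.independent B" "v \<notin> vec.span B" by (auto simp: vec.independent_insert)
    then show ?case using insert card_span_insert[of v B] by simp
  qed
qed

lemma card_subspace:
  fixes W :: "('a::{field,finite}^'n) set"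
  assumes "vec.subspace W"
  shows "card W = CARD('a) ^ vec.dim W"
proof -
  obtain B where B: "B \<subseteq> W" "vec.independent B" "W \<subseteq> vec.span B" "card B = vec.dim W"
    using vec.basis_exists by blast
  then have "vec.span B = W" using assms by (intro vec.span_subspace)
  then show ?thesis using card_span_independent[OF B(2)] B(4) by simp
qed

text \<open>Counting these lists in two ways gives the Gaussian binomial bounds on numbers of subspaces.\<close>

fun independent_extensions :: "('a::field^'n) set \<Rightarrow> ('a^'n) set \<Rightarrow> nat \<Rightarrow> ('a^'n) list set" where
  "independent_extensions U Z 0 = {[]}"
| "independent_extensions U Z (Suc r) =
     {v # vs | v vs. vs \<in> independent_extensions U Z r \<and> v \<in> U \<and> v \<notin> vec.span (Z \<union> set vs)}"

lemma independent_extensionsD: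
  assumes "vs \<in> independent_extensions U Z r"
  shows "set vs \<subseteq> U \<and> length vs = r \<and> vec.dim (Z \<union> set vs) = vec.dim Z + r"
  using assms
proof (induction r arbitrary: vs)
  case 0 then show ?case by simp
next
  case (Suc r)
  then obtain v ws where vs: "vs = v # ws" "ws \<in> independent_extensions U Z r" "v \<in> U"
      "v \<notin> vec.span (Z \<union> set ws)"
    by auto
  then have "Z \<union> set vs = insert v (Z \<union> set ws)" by auto
  then show ?case using Suc.IH[OF vs(2)] vs vec.dim_insert[of v "Z \<union> set ws"] by auto
qed

lemma finite_independent_extensions:
  "finite (independent_extensions (U :: ('a::{field,finite}^'n) set) Z r)"
proof (rule finite_subset)
  show "independent_extensions U Z r \<subseteq> {vs. set vs \<subseteq> UNIV \<and> length vs = r}"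
    using independent_extensionsD by blast
qed (rule finite_lists_length_eq, simp)

lemma card_independent_extensions:
  fixes U Z :: "('a::{field,finite}^'n) set"
  assumes U: "vec.subspace U" and Z: "vec.subspace Z" "Z \<subseteq> U"
    and r: "vec.dim Z + r \<le> vec.dim U"
  shows "real (card (independent_extensions U Z r))
           = (\<Prod>s<r. real CARD('a) ^ vec.dim U - real CARD('a) ^ (vec.dim Z + s))"
  using r
proof (induction r)
  case 0 then show ?case by simp
next
  case (Suc r)
  let ?E = "independent_extensions U Z r"
  let ?q = "CARD('a)"
  have choices: "card (U - vec.span (Z \<union> set vs)) = ?q ^ vec.dim U - ?q ^ (vec.dim Z + r)"
    if vs: "vs \<in> ?E" for vs
  proof -
    have vs': "set vs \<subseteq> U" "vec.dim (Z \<union> set vs) = vec.dim Z + r"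
      using independent_extensionsD[OF vs] by auto
    then have "vec.span (Z \<union> set vs) \<subseteq> U" using Z U by (intro vec.span_minimal) auto
    then have "card (U - vec.span (Z \<union> set vs)) = card U - card (vec.span (Z \<union> set vs))"
      by (intro card_Diff_subset) auto
    then show ?thesis using card_subspace[OF U] card_subspace[of "vec.span (Z \<union> set vs)"] vs'
      by simp
  qed
  have "independent_extensions U Z (Suc r)
      = (\<lambda>(vs, v). v # vs) ` (SIGMA vs:?E. U - vec.span (Z \<union> set vs))"
    by auto
  moreover have "inj_on (\<lambda>(vs, v). v # vs) (SIGMA vs:?E. U - vec.span (Z \<union> set vs))"
    by (auto simp: inj_on_def)
  ultimately have "card (independent_extensions U Z (Suc r))
      = (\<Sum>vs\<in>?E. card (U - vec.span (Z \<union> set vs)))"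
    by (simp add: card_image card_SigmaI finite_independent_extensions)
  also have "\<dots> = card ?E * (?q ^ vec.dim U - ?q ^ (vec.dim Z + r))"
    using choices by simp
  finally have c: "card (independent_extensions U Z (Suc r))
      = card ?E * (?q ^ vec.dim U - ?q ^ (vec.dim Z + r))" .
  have "?q ^ (vec.dim Z + r) \<le> ?q ^ vec.dim U"
    using Suc.prems card_field_ge_2[where 'a='a] by (intro power_increasing) auto
  then have "real (card (independent_extensions U Z (Suc r)))
      = real (card ?E) * (real ?q ^ vec.dim U - real ?q ^ (vec.dim Z + r))"
    unfolding c by (simp add: of_nat_diff)
  then show ?case using Suc by simp
qed

lemma independent_extensions_nonempty:
  fixes U Z :: "('a::{field,finite}^'n) set"
  assumes "vec.subspace U" "vec.subspace Z" "Z \<subseteq> U" "vec.dim Z + r \<le> vec.dim U"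
  shows "independent_extensions U Z r \<noteq> {}"
proof -
  have "(\<Prod>s<r. real CARD('a) ^ vec.dim U - real CARD('a) ^ (vec.dim Z + s)) > 0"
  proof (rule prod_pos)
    fix s assume "s \<in> {..<r}"
    then have "real CARD('a) ^ (vec.dim Z + s) < real CARD('a) ^ vec.dim U"
      using assms(4) card_field_ge_2[where 'a='a] by (intro power_strict_increasing) auto
    then show "0 < real CARD('a) ^ vec.dim U - real CARD('a) ^ (vec.dim Z + s)" by simp
  qed
  then have "real (card (independent_extensions U Z r)) > 0"
    unfolding card_independent_extensions[OF assms] .
  then show ?thesis by auto
qed

lemma independent_extensions_mono:
  fixes A U Z :: "('a::field^'n) set"
  assumes A: "vec.subspace A" "A \<subseteq> U" and Z: "vec.subspace Z"
  shows "independent_extensions A (A \<inter> Z) r \<subseteq> independent_extensions U Z r"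
proof (induction r)
  case 0 then show ?case by simp
next
  case (Suc r)
  show ?case
  proof
    fix vs assume "vs \<in> independent_extensions A (A \<inter> Z) (Suc r)"
    then obtain v ws where vs: "vs = v # ws" "ws \<in> independent_extensions A (A \<inter> Z) r" "v \<in> A"
        "v \<notin> vec.span ((A \<inter> Z) \<union> set ws)"
      by auto
    have "vec.span (set ws) \<subseteq> A"
      using independent_extensionsD[OF vs(2)] A by (intro vec.span_minimal) auto
    have "v \<notin> vec.span (Z \<union> set ws)"
    proof
      assume "v \<in> vec.span (Z \<union> set ws)"
      then obtain x y where xy: "v = x + y" "x \<in> vec.span Z" "y \<in> vec.span (set ws)"
        unfolding vec.span_Un by blast
      have "x \<in> Z" using xy(2) Z by (metis vec.span_eq_iff)
      moreover have "x \<in> A" using xy \<open>vec.span (set ws) \<subseteq> A\<close> \<open>v \<in> A\<close> A(1)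
        by (metis add_diff_cancel_right' subsetD vec.subspace_diff)
      ultimately have "v \<in> vec.span ((A \<inter> Z) \<union> set ws)"
        unfolding vec.span_Un using xy by (auto intro: vec.span_base)
      then show False using vs(4) by blast
    qed
    then show "vs \<in> independent_extensions U Z (Suc r)" using vs Suc A(2) by auto
  qed
qed

lemma span_independent_extension:
  fixes A I :: "('a::field^'n) set"
  assumes "vs \<in> independent_extensions A I r" "vec.subspace A" "I \<subseteq> A"
    "vec.dim A = vec.dim I + r"
  shows "vec.span (I \<union> set vs) = A"
proof (rule vec.subspace_dim_equal)
  show "vec.span (I \<union> set vs) \<subseteq> A"
    using independent_extensionsD[OF assms(1)] assms by (intro vec.span_minimal) auto
  show "vec.dim A \<le> vec.dim (vec.span (I \<union> set vs))"
    using independent_extensionsD[OF assms(1)] assms by simp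
qed (use assms in auto)

lemma dim_span_Un_Int:
  fixes A B :: "('a::field^'n) set"
  assumes "vec.subspace A" "vec.subspace B"
  shows "vec.dim (vec.span (A \<union> B)) + vec.dim (A \<inter> B) = vec.dim A + vec.dim B"
proof -
  have "vec.span A = A" "vec.span B = B" using assms by (simp_all only: vec.span_eq_iff)
  then have "vec.span (A \<union> B) = {x + y |x y. x \<in> A \<and> y \<in> B}"
    unfolding vec.span_Un by (simp only:)
  then show ?thesis using vec.dim_sums_Int[OF assms] by simp
qed

lemma exists_subspace_between:
  fixes I Y :: "('a::{field,finite}^'n) set"
  assumes I: "vec.subspace I" and Y: "vec.subspace Y" and IY: "I \<subseteq> Y"
    and d: "vec.dim I \<le> d" "d \<le> vec.dim Y"
  obtains A where "vec.subspace A" "I \<subseteq> A" "A \<subseteq> Y" "vec.dim A = d"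
proof -
  obtain vs where vs: "vs \<in> independent_extensions Y I (d - vec.dim I)"
    using independent_extensions_nonempty[OF Y I IY, of "d - vec.dim I"] d by auto
  then have vs': "set vs \<subseteq> Y" "vec.dim (I \<union> set vs) = d"
    using independent_extensionsD[OF vs] d by auto
  show ?thesis
  proof
    show "I \<subseteq> vec.span (I \<union> set vs)" using vec.span_superset by blast
    show "vec.span (I \<union> set vs) \<subseteq> Y" using vs' Y IY by (intro vec.span_minimal) auto
  qed (use vs' in auto)
qed

lemma exists_subspace_disjoint:
  fixes W Y :: "('a::{field,finite}^'n) set"
  assumes W: "vec.subspace W" and Y: "vec.subspace Y" and WY: "W \<subseteq> Y"
    and d: "vec.dim W + d \<le> vec.dim Y"
  obtains D where "vec.subspace D" "D \<subseteq> Y" "D \<inter> W = {0}" "vec.dim D = d"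
proof -
  obtain vs where vs: "vs \<in> independent_extensions Y W d"
    using independent_extensions_nonempty[OF Y W WY d] by blast
  then have vs': "set vs \<subseteq> Y" "length vs = d" "vec.dim (W \<union> set vs) = vec.dim W + d"
    using independent_extensionsD[OF vs] by auto
  define D where "D = vec.span (set vs)"
  have D: "vec.subspace D" by (simp add: D_def)
  have "vec.span (W \<union> D) = vec.span (W \<union> set vs)"
    unfolding D_def vec.span_Un by (simp add: vec.span_span)
  then have "vec.dim W + d + vec.dim (W \<inter> D) = vec.dim W + vec.dim D"
    using dim_span_Un_Int[OF W D] vs'(3) by simp
  moreover have "vec.dim D \<le> d"
    using vec.dim_le_card[of D "set vs"] card_length[of vs] vs'(2)
    by (simp add: D_def vec.span_superset)
  ultimately have "vec.dim D = d" "vec.dim (W \<inter> D) = 0" by (simp_all del: vec.dim_eq_0)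
  then have "D \<inter> W = {0}" using D W vec.subspace_0 by auto
  moreover have "D \<subseteq> Y" unfolding D_def using vs' Y by (intro vec.span_minimal) auto
  ultimately show ?thesis using that D \<open>vec.dim D = d\<close> by blast
qed

lemma exists_line_in_Int:
  fixes X D Y :: "('a::{field,finite}^'n) set"
  assumes X: "vec.subspace X" and D: "vec.subspace D" and Y: "vec.subspace Y"
    and "X \<subseteq> Y" "D \<subseteq> Y" and dim: "vec.dim Y < vec.dim X + vec.dim D"
  obtains L where "vec.subspace L" "L \<subseteq> X \<inter> D" "vec.dim L = 1"
proof -
  have "vec.span (X \<union> D) \<subseteq> Y" using assms by (intro vec.span_minimal) auto
  then have "vec.dim (vec.span (X \<union> D)) \<le> vec.dim Y" by (rule vec.dim_subset)
  then have one: "1 \<le> vec.dim (X \<inter> D)" using dim_span_Un_Int[OF X D] dim by linarith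
  have XD: "vec.subspace (X \<inter> D)" using X D by (rule vec.subspace_inter)
  have zero: "{0} \<subseteq> X \<inter> D" using X D by (simp add: vec.subspace_0)
  obtain L where "vec.subspace L" "{0} \<subseteq> L" "L \<subseteq> X \<inter> D" "vec.dim L = 1"
    by (rule exists_subspace_between[OF vec.subspace_single_0 XD zero _ one]) simp
  then show ?thesis using that by blast
qed

definition subspaces_trace ::
    "('a::field^'n) set \<Rightarrow> ('a^'n) set \<Rightarrow> ('a^'n) set \<Rightarrow> nat \<Rightarrow> ('a^'n) set set" where
  "subspaces_trace U Z I d = {A. vec.subspace A \<and> A \<subseteq> U \<and> A \<inter> Z = I \<and> vec.dim A = d}"

lemma subspaces_trace_dim_le:
  fixes U Z :: "('a::field^'n) set"
  assumes "A \<in> subspaces_trace U Z I d" "vec.subspace U" "vec.subspace Z" "Z \<subseteq> U"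
  shows "vec.dim Z + d \<le> vec.dim U + vec.dim I"
proof -
  have A: "vec.subspace A" "A \<subseteq> U" "A \<inter> Z = I" "vec.dim A = d"
    using assms(1) unfolding subspaces_trace_def by auto
  have "vec.span (A \<union> Z) \<subseteq> U" using A assms by (intro vec.span_minimal) auto
  then have "vec.dim (vec.span (A \<union> Z)) \<le> vec.dim U" by (rule vec.dim_subset)
  then show ?thesis using dim_span_Un_Int[OF A(1) assms(3)] A(3,4) by simp
qed

text \<open>Each such \<open>A\<close> is spanned by \<open>I\<close> together with any of its extension lists, and these lists
  also extend \<open>Z\<close> inside \<open>U\<close>.\<close>

lemma card_subspaces_trace_mult_le:
  fixes U Z I :: "('a::{field,finite}^'n) set"
  assumes U: "vec.subspace U" and Z: "vec.subspace Z" "Z \<subseteq> U" and I: "vec.subspace I"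
    and r: "vec.dim Z + r \<le> vec.dim U"
  shows "real (card (subspaces_trace U Z I (vec.dim I + r))) *
           (\<Prod>s<r. real CARD('a) ^ (vec.dim I + r) - real CARD('a) ^ (vec.dim I + s))
         \<le> (\<Prod>s<r. real CARD('a) ^ vec.dim U - real CARD('a) ^ (vec.dim Z + s))"
proof -
  let ?T = "subspaces_trace U Z I (vec.dim I + r)"
  have A: "vec.subspace A" "A \<subseteq> U" "A \<inter> Z = I" "vec.dim A = vec.dim I + r" if "A \<in> ?T" for A
    using that unfolding subspaces_trace_def by auto
  have card_A: "real (card (independent_extensions A I r))
      = (\<Prod>s<r. real CARD('a) ^ (vec.dim I + r) - real CARD('a) ^ (vec.dim I + s))"
    if "A \<in> ?T" for A
    using card_independent_extensions[of A I r] A[OF that] I by auto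
  have span_eq: "vec.span (I \<union> set vs) = A"
    if "A \<in> ?T" "vs \<in> independent_extensions A I r" for A vs
    using A[OF that(1)] by (intro span_independent_extension[OF that(2)]) auto
  have disjoint: "\<forall>A\<in>?T. \<forall>B\<in>?T. A \<noteq> B \<longrightarrow>
      independent_extensions A I r \<inter> independent_extensions B I r = {}"
    using span_eq by blast
  have "real (card ?T) * (\<Prod>s<r. real CARD('a) ^ (vec.dim I + r) - real CARD('a) ^ (vec.dim I + s))
      = real (\<Sum>A\<in>?T. card (independent_extensions A I r))"
    using card_A by simp
  also have "\<dots> = real (card (\<Union>A\<in>?T. independent_extensions A I r))"
    by (simp add: card_UN_disjoint[OF _ _ disjoint] finite_independent_extensions)
  also have "\<dots> \<le> real (card (independent_extensions U Z r))"
  proof (intro of_nat_mono card_mono finite_independent_extensions UN_least)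
    fix A assume "A \<in> ?T"
    then show "independent_extensions A I r \<subseteq> independent_extensions U Z r"
      using independent_extensions_mono[of A U Z r] A[OF \<open>A \<in> ?T\<close>] Z(1) by simp
  qed
  also have "\<dots> = (\<Prod>s<r. real CARD('a) ^ vec.dim U - real CARD('a) ^ (vec.dim Z + s))"
    using card_independent_extensions[OF U Z r] .
  finally show ?thesis .
qed

lemma gauss_binom_nonneg: "1 \<le> q \<Longrightarrow> 0 \<le> gauss_binom q m r"
  unfolding gauss_binom_def by (intro prod_nonneg ballI divide_nonneg_nonneg) auto

lemma gauss_binom_pos:
  assumes "2 \<le> q" "r \<le> m"
  shows "0 < gauss_binom q m r"
  unfolding gauss_binom_def
proof (rule prod_pos)
  fix s assume "s \<in> {..<r}"
  then have "1 < real q ^ (m - s)" "1 < real q ^ (r - s)"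
    using assms by (auto intro!: one_less_power)
  then show "0 < (real q ^ (m - s) - 1) / (real q ^ (r - s) - 1)" by simp
qed

lemma power_diff_ratio:
  fixes Q :: real
  assumes "1 < Q" "s < r" "a \<le> z" "z + r \<le> m"
  shows "(Q ^ m - Q ^ (z + s)) / (Q ^ (a + r) - Q ^ (a + s))
           = Q ^ (z - a) * ((Q ^ (m - z - s) - 1) / (Q ^ (r - s) - 1))"
proof -
  have "m = (a + s) + (z - a) + (m - z - s)" "z + s = (a + s) + (z - a)" "a + r = (a + s) + (r - s)"
    using assms by linarith+
  then have "Q ^ m = Q ^ (a + s) * Q ^ (z - a) * Q ^ (m - z - s)"
    "Q ^ (z + s) = Q ^ (a + s) * Q ^ (z - a)" "Q ^ (a + r) = Q ^ (a + s) * Q ^ (r - s)"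
    by (metis power_add)+
  then have "Q ^ m - Q ^ (z + s) = Q ^ (a + s) * (Q ^ (z - a) * (Q ^ (m - z - s) - 1))"
    and "Q ^ (a + r) - Q ^ (a + s) = Q ^ (a + s) * (Q ^ (r - s) - 1)"
    by (simp_all add: algebra_simps)
  moreover have "Q ^ (a + s) \<noteq> 0" using assms by simp
  ultimately show ?thesis by (metis nonzero_mult_divide_mult_cancel_left times_divide_eq_right)
qed

lemma card_subspaces_trace_le:
  fixes U Z I :: "('a::{field,finite}^'n) set"
  assumes U: "vec.subspace U" and Z: "vec.subspace Z" "Z \<subseteq> U" and I: "vec.subspace I" "I \<subseteq> Z"
  shows "real (card (subspaces_trace U Z I (vec.dim I + r)))
           \<le> real CARD('a) ^ ((vec.dim Z - vec.dim I) * r) * gauss_binom CARD('a) (vec.dim U - vec.dim Z) r"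
proof (cases "vec.dim Z + r \<le> vec.dim U")
  case False
  then have "subspaces_trace U Z I (vec.dim I + r) = {}"
    using subspaces_trace_dim_le[OF _ U Z] by fastforce
  then show ?thesis using gauss_binom_nonneg[of "CARD('a)"] by simp
next
  case True
  define Q where "Q = real CARD('a)"
  have Q: "1 < Q" using card_field_ge_2[where 'a='a] by (simp add: Q_def)
  have dim_I: "vec.dim I \<le> vec.dim Z" using I(2) by (rule vec.dim_subset)
  let ?P = "\<Prod>s<r. Q ^ (vec.dim I + r) - Q ^ (vec.dim I + s)"
  have "0 < ?P"
  proof (rule prod_pos)
    fix s assume "s \<in> {..<r}"
    then have "Q ^ (vec.dim I + s) < Q ^ (vec.dim I + r)" using Q by (intro power_strict_increasing) auto
    then show "0 < Q ^ (vec.dim I + r) - Q ^ (vec.dim I + s)" by simp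
  qed
  then have "real (card (subspaces_trace U Z I (vec.dim I + r)))
      \<le> (\<Prod>s<r. Q ^ vec.dim U - Q ^ (vec.dim Z + s)) / ?P"
    using card_subspaces_trace_mult_le[OF U Z I(1) True] by (simp add: Q_def le_divide_eq)
  also have "\<dots> = (\<Prod>s<r. (Q ^ vec.dim U - Q ^ (vec.dim Z + s))
                          / (Q ^ (vec.dim I + r) - Q ^ (vec.dim I + s)))"
    by (rule prod_dividef[symmetric])
  also have "\<dots> = (\<Prod>s<r. Q ^ (vec.dim Z - vec.dim I)
                          * ((Q ^ (vec.dim U - vec.dim Z - s) - 1) / (Q ^ (r - s) - 1)))"
    using Q dim_I True by (intro prod.cong refl power_diff_ratio) auto
  also have "\<dots> = Q ^ ((vec.dim Z - vec.dim I) * r) * gauss_binom CARD('a) (vec.dim U - vec.dim Z) r"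
    unfolding gauss_binom_def prod.distrib by (simp add: Q_def power_mult)
  finally show ?thesis unfolding Q_def .
qed

lemma card_subspaces_le:
  fixes U :: "('a::{field,finite}^'n) set"
  assumes "vec.subspace U"
  shows "real (card {A. vec.subspace A \<and> A \<subseteq> U \<and> vec.dim A = r}) \<le> gauss_binom CARD('a) (vec.dim U) r"
proof -
  have "{A. vec.subspace A \<and> A \<subseteq> U \<and> vec.dim A = r} = subspaces_trace U {0} {0} (vec.dim {0} + r)"
    unfolding subspaces_trace_def by (auto simp: vec.subspace_0)
  then show ?thesis
    using card_subspaces_trace_le[of U "{0}" "{0}" r] assms by (simp add: vec.subspace_0)
qed

lemma card_superspaces_le:
  fixes S U :: "('a::{field,finite}^'n) set"
  assumes "vec.subspace S" "vec.subspace U" "S \<subseteq> U"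
  shows "real (card {A. vec.subspace A \<and> S \<subseteq> A \<and> A \<subseteq> U \<and> vec.dim A = vec.dim S + r})
           \<le> gauss_binom CARD('a) (vec.dim U - vec.dim S) r"
proof -
  have "{A. vec.subspace A \<and> S \<subseteq> A \<and> A \<subseteq> U \<and> vec.dim A = vec.dim S + r}
      = subspaces_trace U S S (vec.dim S + r)"
    unfolding subspaces_trace_def by auto
  then show ?thesis using card_subspaces_trace_le[of U S S r] assms by simp
qed

lemma card_UN_le_uniform:
  assumes "finite I" "\<And>x. x \<in> I \<Longrightarrow> real (card (A x)) \<le> b"
  shows "real (card (\<Union>x\<in>I. A x)) \<le> real (card I) * b"
proof -
  have "real (card (\<Union>x\<in>I. A x)) \<le> (\<Sum>x\<in>I. real (card (A x)))"
    unfolding of_nat_sum[symmetric] by (intro of_nat_mono card_UN_le assms(1))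
  also have "\<dots> \<le> real (card I) * b" using assms(2) by (rule sum_bounded_above)
  finally show ?thesis .
qed

lemma tau_le_cover: "is_t_cover t \<F> W \<Longrightarrow> tau t \<F> \<le> vec.dim W"
  unfolding tau_def by (intro Least_le) blast

lemma containing_subset_branches:
  fixes \<F> :: "('a::{field,finite}^'n) set set"
  assumes \<F>: "\<F> \<subseteq> subspaces_dim k" and "t \<le> k" and "F' \<in> \<F>"
    and D: "vec.subspace D" "D \<subseteq> F'" "vec.dim D = k - t + 1"
  shows "{F\<in>\<F>. S \<subseteq> F} \<subseteq> {F\<in>\<F>. vec.dim (F' \<inter> F) < t} \<union>
           (\<Union>L\<in>{L. vec.subspace L \<and> L \<subseteq> D \<and> vec.dim L = 1}. {F\<in>\<F>. vec.span (S \<union> L) \<subseteq> F})"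
proof (intro subsetI)
  fix F assume F: "F \<in> {F\<in>\<F>. S \<subseteq> F}"
  have sub: "vec.subspace F" "vec.subspace F'" "vec.dim F' = k"
    using F \<open>F' \<in> \<F>\<close> \<F> unfolding subspaces_dim_def by auto
  show "F \<in> {F\<in>\<F>. vec.dim (F' \<inter> F) < t} \<union>
           (\<Union>L\<in>{L. vec.subspace L \<and> L \<subseteq> D \<and> vec.dim L = 1}. {F\<in>\<F>. vec.span (S \<union> L) \<subseteq> F})"
  proof (cases "vec.dim (F' \<inter> F) < t")
    case False
    then have "vec.dim F' < vec.dim (F' \<inter> F) + vec.dim D" using D(3) sub(3) \<open>t \<le> k\<close> by linarith
    then obtain L where L: "vec.subspace L" "L \<subseteq> (F' \<inter> F) \<inter> D" "vec.dim L = 1"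
      using exists_line_in_Int[OF vec.subspace_inter[OF sub(2,1)] D(1) sub(2) _ D(2)] by blast
    then have "vec.span (S \<union> L) \<subseteq> F" using F sub(1) by (intro vec.span_minimal) auto
    then show ?thesis using F L by blast
  qed (use F in simp)
qed

lemma geometric_bound_Suc:
  fixes c G :: real
  shows "c * (c ^ d * G + (\<Sum>m<d. c ^ m)) + 1 = c ^ Suc d * G + (\<Sum>m<Suc d. c ^ m)"
  by (simp only: sum.lessThan_Suc_shift power_Suc sum_distrib_left)
    (simp add: algebra_simps sum_distrib_left)

lemma card_containing_le_step:
  fixes \<F> :: "('a::{field,finite}^'n) set set"
  assumes \<F>: "\<F> \<subseteq> subspaces_dim k" and almost: "almost_t_intersecting t \<F>" and "t \<le> k"
    and S: "vec.subspace S" "vec.dim S < tau t \<F>" and "0 \<le> b"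
    and extend: "\<And>S'. vec.subspace S' \<Longrightarrow> S \<subseteq> S' \<Longrightarrow> vec.dim S' = vec.dim S + 1 \<Longrightarrow>
                   real (card {F\<in>\<F>. S' \<subseteq> F}) \<le> b"
  shows "real (card {F\<in>\<F>. S \<subseteq> F}) \<le> gauss_binom CARD('a) (k - t + 1) 1 * b + 1"
proof -
  have "\<not> is_t_cover t \<F> S" using tau_le_cover S(2) by fastforce
  then obtain F' where F': "F' \<in> \<F>" "vec.dim (S \<inter> F') < t"
    using S(1) unfolding is_t_cover_def by auto
  have F'_sub: "vec.subspace F'" "vec.dim F' = k" using F'(1) \<F> unfolding subspaces_dim_def by auto
  have "vec.dim (S \<inter> F') + (k - t + 1) \<le> vec.dim F'" using F'(2) F'_sub(2) \<open>t \<le> k\<close> by linarith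
  then obtain D where D: "vec.subspace D" "D \<subseteq> F'" "D \<inter> (S \<inter> F') = {0}" "vec.dim D = k - t + 1"
    using exists_subspace_disjoint[OF vec.subspace_inter[OF S(1) F'_sub(1)] F'_sub(1)] by blast
  define Ls where "Ls = {L. vec.subspace L \<and> L \<subseteq> D \<and> vec.dim L = 1}"
  have card_Ls: "real (card Ls) \<le> gauss_binom CARD('a) (k - t + 1) 1"
    unfolding Ls_def using card_subspaces_le[OF D(1), of 1] D(4) by simp
  have branch: "real (card {F\<in>\<F>. vec.span (S \<union> L) \<subseteq> F}) \<le> b" if "L \<in> Ls" for L
  proof (rule extend)
    have L: "vec.subspace L" "L \<subseteq> D" "vec.dim L = 1" using that unfolding Ls_def by auto
    then have "S \<inter> L \<subseteq> D \<inter> (S \<inter> F')" using D(2) by blast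
    then have "vec.dim (S \<inter> L) = 0" using D(3) by simp
    then show "vec.dim (vec.span (S \<union> L)) = vec.dim S + 1"
      using dim_span_Un_Int[OF S(1) L(1)] L(3) by linarith
  qed (auto intro: vec.span_base)
  have "{F\<in>\<F>. S \<subseteq> F}
      \<subseteq> {F\<in>\<F>. vec.dim (F' \<inter> F) < t} \<union> (\<Union>L\<in>Ls. {F\<in>\<F>. vec.span (S \<union> L) \<subseteq> F})"
    unfolding Ls_def using containing_subset_branches[OF \<F> \<open>t \<le> k\<close> F'(1) D(1,2,4)] .
  then have "card {F\<in>\<F>. S \<subseteq> F}
      \<le> card {F\<in>\<F>. vec.dim (F' \<inter> F) < t} + card (\<Union>L\<in>Ls. {F\<in>\<F>. vec.span (S \<union> L) \<subseteq> F})"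
    by (meson card_Un_le card_mono finite order_trans)
  moreover have "card {F\<in>\<F>. vec.dim (F' \<inter> F) < t} \<le> 1"
    using almost F'(1) unfolding almost_t_intersecting_def by blast
  moreover have "real (card (\<Union>L\<in>Ls. {F\<in>\<F>. vec.span (S \<union> L) \<subseteq> F})) \<le> real (card Ls) * b"
    by (rule card_UN_le_uniform[OF finite branch])
  moreover have "real (card Ls) * b \<le> gauss_binom CARD('a) (k - t + 1) 1 * b"
    using card_Ls \<open>0 \<le> b\<close> by (rule mult_right_mono)
  ultimately show ?thesis by (smt (verit) of_nat_add of_nat_le_iff of_nat_1)
qed

lemma card_containing_le:
  fixes \<F> :: "('a::{field,finite}^'n) set set"
  assumes \<F>: "\<F> \<subseteq> subspaces_dim k" and almost: "almost_t_intersecting t \<F>"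
    and "t \<le> k" "tau t \<F> \<le> k"
    and "vec.subspace S" "vec.dim S + d = tau t \<F>"
  shows "real (card {F\<in>\<F>. S \<subseteq> F})
           \<le> gauss_binom CARD('a) (k - t + 1) 1 ^ d
               * gauss_binom CARD('a) (CARD('n) - tau t \<F>) (k - tau t \<F>)
             + (\<Sum>m<d. gauss_binom CARD('a) (k - t + 1) 1 ^ m)"
  using assms(5,6)
proof (induction d arbitrary: S)
  case 0
  have "{F\<in>\<F>. S \<subseteq> F}
      \<subseteq> {A. vec.subspace A \<and> S \<subseteq> A \<and> A \<subseteq> UNIV \<and> vec.dim A = vec.dim S + (k - tau t \<F>)}"
    using \<F> 0 \<open>tau t \<F> \<le> k\<close> unfolding subspaces_dim_def by auto
  then have "real (card {F\<in>\<F>. S \<subseteq> F})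
      \<le> real (card {A. vec.subspace A \<and> S \<subseteq> A \<and> A \<subseteq> UNIV \<and> vec.dim A = vec.dim S + (k - tau t \<F>)})"
    by (intro of_nat_mono card_mono) simp_all
  also have "\<dots> \<le> gauss_binom CARD('a) (vec.dim (UNIV :: ('a^'n) set) - vec.dim S) (k - tau t \<F>)"
    using 0 by (intro card_superspaces_le) auto
  finally show ?case using 0 by (simp add: card_cart_basis)
next
  case (Suc d)
  let ?c = "gauss_binom CARD('a) (k - t + 1) 1"
  let ?R = "?c ^ d * gauss_binom CARD('a) (CARD('n) - tau t \<F>) (k - tau t \<F>) + (\<Sum>m<d. ?c ^ m)"
  have "0 \<le> ?R" using card_field_ge_2[where 'a='a]
    by (intro add_nonneg_nonneg mult_nonneg_nonneg sum_nonneg zero_le_power gauss_binom_nonneg) auto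
  then have "real (card {F\<in>\<F>. S \<subseteq> F}) \<le> ?c * ?R + 1"
    using card_containing_le_step[OF \<F> almost \<open>t \<le> k\<close> Suc.prems(1)] Suc.IH Suc.prems(2) by simp
  then show ?case by (simp only: geometric_bound_Suc)
qed

definition trace_joins :: "('a::field^'n) set \<Rightarrow> ('a^'n) set \<Rightarrow> nat \<Rightarrow> nat \<Rightarrow> ('a^'n) set set" where
  "trace_joins X1 X2 t i =
     {vec.span (A \<union> B) | I A B. vec.subspace I \<and> I \<subseteq> X1 \<inter> X2 \<and> vec.dim I = i
        \<and> A \<in> subspaces_trace X1 (X1 \<inter> X2) I t \<and> B \<in> subspaces_trace X2 (X1 \<inter> X2) I t}"

lemma trace_joinsD:
  assumes "M \<in> trace_joins X1 X2 t i"
  shows "vec.subspace M \<and> vec.dim M + i = 2 * t"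
proof -
  obtain I A B where I: "vec.dim I = i" and M: "M = vec.span (A \<union> B)"
    and A: "A \<in> subspaces_trace X1 (X1 \<inter> X2) I t" and B: "B \<in> subspaces_trace X2 (X1 \<inter> X2) I t"
    using assms unfolding trace_joins_def by blast
  have "A \<inter> B = I" using A B unfolding subspaces_trace_def by blast
  then show ?thesis
    using dim_span_Un_Int[of A B] A B I M unfolding subspaces_trace_def by auto
qed

lemma restr_family_covered_by_trace_joins:
  fixes \<F> :: "('a::{field,finite}^'n) set set"
  assumes "\<forall>F\<in>\<F>. vec.subspace F" and X: "vec.subspace X1" "vec.subspace X2" and "i \<le> t"
    and F: "F \<in> restr_family \<F> X1 X2 t i"
  shows "\<exists>M\<in>trace_joins X1 X2 t i. M \<subseteq> F"
proof -
  have F': "vec.subspace F" "t \<le> vec.dim (F \<inter> X1)" "t \<le> vec.dim (F \<inter> X2)" "vec.dim (F \<inter> X1 \<inter> X2) = i"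
    using F assms(1) unfolding restr_family_def by auto
  define I where "I = F \<inter> (X1 \<inter> X2)"
  have I: "vec.subspace I" "vec.dim I = i" "I \<subseteq> X1 \<inter> X2"
    using F'(1,4) X unfolding I_def by (auto simp: Int_assoc intro!: vec.subspace_inter)
  have "\<exists>A. A \<in> subspaces_trace X (X1 \<inter> X2) I t \<and> A \<subseteq> F"
    if X_sub: "vec.subspace X" and X12: "X1 \<inter> X2 \<subseteq> X" and dim_X: "t \<le> vec.dim (F \<inter> X)" for X
  proof -
    have "vec.subspace (F \<inter> X)" using F'(1) X_sub by (rule vec.subspace_inter)
    moreover have "I \<subseteq> F \<inter> X" using X12 unfolding I_def by blast
    ultimately obtain A where "vec.subspace A" "I \<subseteq> A" "A \<subseteq> F \<inter> X" "vec.dim A = t"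
      using exists_subspace_between[OF I(1)] I(2) \<open>i \<le> t\<close> dim_X by metis
    moreover from this have "A \<inter> (X1 \<inter> X2) = I" unfolding I_def using X12 by blast
    ultimately show ?thesis unfolding subspaces_trace_def by blast
  qed
  then obtain A B where "A \<in> subspaces_trace X1 (X1 \<inter> X2) I t" "A \<subseteq> F"
      "B \<in> subspaces_trace X2 (X1 \<inter> X2) I t" "B \<subseteq> F"
    using X F'(2,3) by (metis Int_lower1 Int_lower2)
  moreover from this have "vec.span (A \<union> B) \<subseteq> F" using F'(1) by (intro vec.span_minimal) auto
  ultimately show ?thesis using I unfolding trace_joins_def by blast
qed

lemma card_restr_family_le:
  fixes \<F> :: "('a::{field,finite}^'n) set set"
  assumes "\<forall>F\<in>\<F>. vec.subspace F" "vec.subspace X1" "vec.subspace X2" "i \<le> t"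
    and "\<And>M. M \<in> trace_joins X1 X2 t i \<Longrightarrow> real (card {F\<in>\<F>. M \<subseteq> F}) \<le> b"
  shows "real (card (restr_family \<F> X1 X2 t i)) \<le> real (card (trace_joins X1 X2 t i)) * b"
proof -
  have "restr_family \<F> X1 X2 t i \<subseteq> (\<Union>M\<in>trace_joins X1 X2 t i. {F\<in>\<F>. M \<subseteq> F})"
    using restr_family_covered_by_trace_joins[OF assms(1-4)] unfolding restr_family_def by auto
  then have "card (restr_family \<F> X1 X2 t i) \<le> card (\<Union>M\<in>trace_joins X1 X2 t i. {F\<in>\<F>. M \<subseteq> F})"
    by (intro card_mono) simp_all
  also have "real \<dots> \<le> real (card (trace_joins X1 X2 t i)) * b"
    using assms(5) by (rule card_UN_le_uniform[OF finite])
  finally show ?thesis by simp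
qed

lemma card_trace_joins_le:
  fixes X1 X2 :: "('a::{field,finite}^'n) set"
  defines "q \<equiv> CARD('a)" and "j \<equiv> vec.dim (X1 \<inter> X2)"
  assumes X: "vec.subspace X1" "vec.subspace X2" and "i \<le> t"
  shows "real (card (trace_joins X1 X2 t i))
           \<le> real q ^ (2 * (j - i) * (t - i)) * gauss_binom q j i
             * gauss_binom q (vec.dim X1 - j) (t - i) * gauss_binom q (vec.dim X2 - j) (t - i)"
proof -
  let ?Is = "{I. vec.subspace I \<and> I \<subseteq> X1 \<inter> X2 \<and> vec.dim I = i}"
  let ?\<alpha> = "\<lambda>X. real q ^ ((j - i) * (t - i)) * gauss_binom q (vec.dim X - j) (t - i)"
  have X12: "vec.subspace (X1 \<inter> X2)" using X by (rule vec.subspace_inter)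
  have card_trace: "real (card (subspaces_trace X (X1 \<inter> X2) I t)) \<le> ?\<alpha> X"
    if "I \<in> ?Is" "vec.subspace X" "X1 \<inter> X2 \<subseteq> X" for I X
    using card_subspaces_trace_le[OF that(2) X12 that(3), of I "t - i"] that(1) \<open>i \<le> t\<close>
    by (simp add: q_def j_def)
  have "trace_joins X1 X2 t i \<subseteq> (\<lambda>(I, A, B). vec.span (A \<union> B)) `
      (SIGMA I:?Is. subspaces_trace X1 (X1 \<inter> X2) I t \<times> subspaces_trace X2 (X1 \<inter> X2) I t)"
    unfolding trace_joins_def by fast
  then have "real (card (trace_joins X1 X2 t i))
      \<le> real (card (SIGMA I:?Is. subspaces_trace X1 (X1 \<inter> X2) I t \<times> subspaces_trace X2 (X1 \<inter> X2) I t))"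
    by (meson card_image_le card_mono finite of_nat_mono order_trans)
  also have "\<dots> = (\<Sum>I\<in>?Is. real (card (subspaces_trace X1 (X1 \<inter> X2) I t))
                         * real (card (subspaces_trace X2 (X1 \<inter> X2) I t)))"
    by (simp add: card_cartesian_product)
  also have "\<dots> \<le> real (card ?Is) * (?\<alpha> X1 * ?\<alpha> X2)"
    using card_trace X card_field_ge_2[where 'a='a]
    by (intro sum_bounded_above mult_mono mult_nonneg_nonneg zero_le_power gauss_binom_nonneg)
      (auto simp: q_def)
  also have "\<dots> \<le> gauss_binom q j i * (?\<alpha> X1 * ?\<alpha> X2)"
    using card_subspaces_le[OF X12, of i] card_field_ge_2[where 'a='a]
    by (intro mult_right_mono mult_nonneg_nonneg zero_le_power gauss_binom_nonneg) (auto simp: q_def j_def)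
  also have "\<dots> = real q ^ (2 * (j - i) * (t - i)) * gauss_binom q j i
      * gauss_binom q (vec.dim X1 - j) (t - i) * gauss_binom q (vec.dim X2 - j) (t - i)"
  proof -
    have "2 * (j - i) * (t - i) = (j - i) * (t - i) + (j - i) * (t - i)" by simp
    then show ?thesis by (simp only: power_add mult_ac)
  qed
  finally show ?thesis .
qed

theorem lemma6p1:
  fixes \<F> :: "('a::{field,finite} ^ 'n) set set"
    and X1 X2 :: "('a ^ 'n) set"
    and n k t l i j :: nat
  defines "q \<equiv> CARD('a)"
  assumes "n = CARD('n)"
    and "0 < n" "0 < k" "0 < t" "0 < l" "0 < i" "0 < j"
    and "i \<le> min t j" "2 * t - i \<le> k" "t + j - i \<le> l" "n \<ge> 2 * k"
    and "\<F> \<subseteq> subspaces_dim k"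
    and "almost_t_intersecting t \<F>"
    and "2 * t - i \<le> tau t \<F>" "tau t \<F> \<le> k"
    and "X1 \<in> subspaces_dim l" "X2 \<in> subspaces_dim l"
    and "vec.dim (X1 \<inter> X2) = j"
  shows "real (card (restr_family \<F> X1 X2 t i)) /
           (real q ^ (2 * (j - i) * (t - i)) * gauss_binom q j i * (gauss_binom q (l - j) (t - i))\<^sup>2)
         \<le> gauss_binom q (k - t + 1) 1 ^ (tau t \<F> + i - 2 * t) * gauss_binom q (n - tau t \<F>) (k - tau t \<F>)
           + (\<Sum>m<tau t \<F> + i - 2 * t. gauss_binom q (k - t + 1) 1 ^ m)"
proof -
  let ?Den = "real q ^ (2 * (j - i) * (t - i)) * gauss_binom q j i * (gauss_binom q (l - j) (t - i))\<^sup>2"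
  let ?R = "gauss_binom q (k - t + 1) 1 ^ (tau t \<F> + i - 2 * t) * gauss_binom q (n - tau t \<F>) (k - tau t \<F>)
           + (\<Sum>m<tau t \<F> + i - 2 * t. gauss_binom q (k - t + 1) 1 ^ m)"
  have q: "2 \<le> q" unfolding q_def by (rule card_field_ge_2)
  have X: "vec.subspace X1" "vec.dim X1 = l" "vec.subspace X2" "vec.dim X2 = l"
    using assms unfolding subspaces_dim_def by auto
  have \<F>_sub: "\<forall>F\<in>\<F>. vec.subspace F" using assms unfolding subspaces_dim_def by auto
  have "t \<le> k" using \<open>i \<le> min t j\<close> \<open>2 * t - i \<le> k\<close> by linarith
  have "real (card {F\<in>\<F>. M \<subseteq> F}) \<le> ?R" if "M \<in> trace_joins X1 X2 t i" for M
  proof -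
    have "vec.subspace M" "vec.dim M + (tau t \<F> + i - 2 * t) = tau t \<F>"
      using trace_joinsD[OF that] \<open>2 * t - i \<le> tau t \<F>\<close> by auto
    then show ?thesis unfolding q_def \<open>n = CARD('n)\<close>
      by (rule card_containing_le[OF \<open>\<F> \<subseteq> subspaces_dim k\<close> \<open>almost_t_intersecting t \<F>\<close>
            \<open>t \<le> k\<close> \<open>tau t \<F> \<le> k\<close>])
  qed
  then have "real (card (restr_family \<F> X1 X2 t i)) \<le> real (card (trace_joins X1 X2 t i)) * ?R"
    using card_restr_family_le[OF \<F>_sub X(1,3)] \<open>i \<le> min t j\<close> by simp
  also have "\<dots> \<le> ?Den * ?R"
    using card_trace_joins_le[OF X(1,3), of i t] X \<open>vec.dim (X1 \<inter> X2) = j\<close> \<open>i \<le> min t j\<close> q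
    by (intro mult_right_mono add_nonneg_nonneg mult_nonneg_nonneg sum_nonneg zero_le_power
        gauss_binom_nonneg) (auto simp: q_def power2_eq_square mult.assoc)
  finally have "real (card (restr_family \<F> X1 X2 t i)) \<le> ?Den * ?R" .
  moreover have "0 < ?Den" using q assms by (intro mult_pos_pos zero_less_power gauss_binom_pos) auto
  ultimately show ?thesis by (simp add: pos_divide_le_eq mult.commute)
qed

end
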